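(* Let $R\in(0,\pi)$, let $\Omega_R\subset\mathbb{S}^2$ be the closed spherical cap of geodesic radius $R$ centered at the north pole, and $$\mathfrak{C}_{\Omega_R}=\{u\colon\overline{\Omega_R}\to [0,\infty) \;:\; u|_{\partial\Omega_R}=0,\ u \text{ piecewise } C^1\}.$$ Then $\inf\{R_2[u]\colon u\in\mathfrak{C}_{\Omega_R}\}=0$. Consequently, $R_2$ has no minimizer in $\mathfrak{C}_{\Omega_R}$.
   Context: For a function $u$ on a domain $\Omega\subset\mathbb{S}^2$ (describing the radial graph $\{e^{u(\xi)}\xi:\xi\in\Omega\}$), with $\nabla_{\mathbb{S}^2}$ the gradient for the round metric and $d\Omega$ the round area element, the (incompressible source flow) resistance functional is $$R_2[u]=\int_{\Omega}\frac{e^{-2u}}{1+|\nabla_{\mathbb{S}^2}u|^2}\,d\Omega.$$ *)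

theory Defs
  imports "HOL-Analysis.Analysis"
begin

text \<open>The unit sphere S^2 is modelled as sphere (0::real^3) 1. A function on (a subset of)
the sphere is modelled as u :: real^3 => real; only its values on the sphere matter.\<close>

definition north :: "real^3" where
  "north = axis 3 1"

definition sph_dist :: "real^3 \<Rightarrow> real^3 \<Rightarrow> real" where
  "sph_dist \<xi> \<eta> = arccos (\<xi> \<bullet> \<eta>)"

definition cap :: "real \<Rightarrow> (real^3) set" where
  "cap R = {\<xi> \<in> sphere 0 1. sph_dist north \<xi> \<le> R}"

definition open_cap :: "real \<Rightarrow> (real^3) set" where
  "open_cap R = {\<xi> \<in> sphere 0 1. sph_dist north \<xi> < R}"

definition cap_boundary :: "real \<Rightarrow> (real^3) set" where
  "cap_boundary R = {\<xi> \<in> sphere 0 1. sph_dist north \<xi> = R}"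

text \<open>For \<xi> on the sphere, the Euclidean gradient of this extension at \<xi> is exactly the
round (tangential) gradient of u at \<xi>.\<close>
definition hom0 :: "(real^3 \<Rightarrow> real) \<Rightarrow> real^3 \<Rightarrow> real" where
  "hom0 u = (\<lambda>x. u (x /\<^sub>R norm x))"

definition sgrad_norm :: "(real^3 \<Rightarrow> real) \<Rightarrow> real^3 \<Rightarrow> real" where
  "sgrad_norm u \<xi> = onorm (frechet_derivative (hom0 u) (at \<xi>))"

definition open_cone :: "(real^3) set \<Rightarrow> (real^3) set" where
  "open_cone A = {x. x \<noteq> 0 \<and> x /\<^sub>R norm x \<in> A}"

definition ball_sector :: "(real^3) set \<Rightarrow> (real^3) set" where
  "ball_sector A = {x. 0 < norm x \<and> norm x \<le> 1 \<and> x /\<^sub>R norm x \<in> A}"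

text \<open>Integral w.r.t. the round area element of S^2 (nonnegative integrands, value in
[0,\<infinity>]): \<integral>_A f d\<Omega> = 3 \<integral>_{sector over A} f(x/|x|) dx, since the sector
integral equals (\<integral>_0^1 r^2 dr) (\<integral>_A f d\<Omega>).\<close>
definition sphere_nn_integral :: "(real^3) set \<Rightarrow> (real^3 \<Rightarrow> real) \<Rightarrow> ennreal" where
  "sphere_nn_integral A f = 3 * (\<integral>\<^sup>+ x \<in> ball_sector A. ennreal (f (x /\<^sub>R norm x)) \<partial>lborel)"

definition R2 :: "real \<Rightarrow> (real^3 \<Rightarrow> real) \<Rightarrow> ennreal" where
  "R2 R u = sphere_nn_integral (cap R)
     (\<lambda>\<xi>. exp (- 2 * u \<xi>) / (1 + (sgrad_norm u \<xi>)\<^sup>2))"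

text \<open>Piecewise C^1 on the closed cap: continuous on the closed cap, and continuously
differentiable (in the round sense) on the open cap off a closed exceptional set of zero
area (the union of the interfaces between the pieces / singular points).\<close>
definition piecewise_C1_cap :: "real \<Rightarrow> (real^3 \<Rightarrow> real) \<Rightarrow> bool" where
  "piecewise_C1_cap R u \<longleftrightarrow>
     continuous_on (cap R) u \<and>
     (\<exists>Z. closed Z \<and> Z \<subseteq> sphere 0 1 \<and> negligible (open_cone Z) \<and>
        (\<exists>g :: real^3 \<Rightarrow> real^3.
           (\<forall>x \<in> open_cone (open_cap R - Z). (hom0 u has_derivative (\<lambda>h. g x \<bullet> h)) (at x)) \<and>
           continuous_on (open_cone (open_cap R - Z)) g))"

definition admissible :: "real \<Rightarrow> (real^3 \<Rightarrow> real) set" where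
  "admissible R = {u. (\<forall>\<xi> \<in> cap R. 0 \<le> u \<xi>) \<and> (\<forall>\<xi> \<in> cap_boundary R. u \<xi> = 0)
                      \<and> piecewise_C1_cap R u}"

end

theory Submission
  imports Defs
begin

text \<open>The cone functions c (R - d(N, \<xi>)) are admissible: they are nonnegative, vanish on the
boundary and are smooth off the north pole N, where their round gradient has norm exactly c.
Since exp(-2u) \<le> 1 for them, their resistance is at most 4\<pi> / (1 + c^2), which tends to 0.
On the other hand, for every admissible u the integrand is continuous and positive on the
nonempty open part of the cap where u is C^1, so the resistance of u is positive and the
infimum is not attained.\<close>

lemma unit_vectors_eq_if_inner_eq_1:
  fixes a b :: "'a::real_inner"
  assumes "norm a = 1" "norm b = 1" "a \<bullet> b = 1"
  shows "a = b"
  using assms norm_cauchy_schwarz_eq[of a b] by simp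

lemma arccos_less_iff_cos_less:
  assumes "0 \<le> R" "R \<le> pi" "\<bar>t\<bar> \<le> 1"
  shows "arccos t < R \<longleftrightarrow> cos R < t"
  using arccos_less_mono[OF assms(3), of "cos R"] assms by (simp add: arccos_cos)

lemma onorm_inner_right_eq: "onorm (\<lambda>h. a \<bullet> h) = norm (a::'a::real_inner)"
proof (rule antisym)
  show "onorm (\<lambda>h. a \<bullet> h) \<le> norm a"
    by (rule onorm_bound) (simp_all add: Cauchy_Schwarz_ineq2)
  have "norm a * norm a \<le> onorm (\<lambda>h. a \<bullet> h) * norm a"
    using onorm[OF bounded_linear_inner_right, of a a]
    by (simp add: power2_norm_eq_inner[symmetric] power2_eq_square)
  then show "norm a \<le> onorm (\<lambda>h. a \<bullet> h)"
    using onorm_pos_le[OF bounded_linear_inner_right, of a] by (cases "a = 0") auto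
qed

lemma span_singleton_null_sets:
  fixes a :: "'a::euclidean_space"
  assumes "1 < DIM('a)"
  shows "span {a} \<in> null_sets lborel"
proof -
  have "dim (span {a}) < DIM('a)"
    using assms dim_span[of "{a}"] dim_le_card[of "{a}" "{a}"] by simp
  then have "negligible (span {a})" by (rule negligible_lowdim)
  then show ?thesis
    by (simp add: negligible_iff_null_sets null_sets_completion_iff closed_span borel_closed)
qed

lemma nn_integral_pos_if_continuous_minorant:
  fixes f :: "'a::euclidean_space \<Rightarrow> ennreal"
  assumes "open U" "x\<^sub>0 \<in> U" "continuous_on U \<phi>"
    and "\<And>x. x \<in> U \<Longrightarrow> 0 < \<phi> x" "\<And>x. x \<in> U \<Longrightarrow> ennreal (\<phi> x) \<le> f x"
  shows "0 < (\<integral>\<^sup>+ x. f x \<partial>lborel)"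
proof -
  define c where "c = \<phi> x\<^sub>0 / 2"
  have "0 < c" using assms(2,4) by (simp add: c_def)
  have "open (U \<inter> \<phi> -` {c<..})"
    using assms(1,3) by (intro continuous_open_preimage) auto
  moreover have "x\<^sub>0 \<in> U \<inter> \<phi> -` {c<..}"
    using assms(2) assms(4)[OF assms(2)] by (simp add: c_def)
  ultimately obtain r where "0 < r" and r: "ball x\<^sub>0 r \<subseteq> U \<inter> \<phi> -` {c<..}"
    by (meson open_contains_ball)
  have "0 < ennreal c * emeasure lborel (ball x\<^sub>0 r)"
    using \<open>0 < c\<close> \<open>0 < r\<close> by (simp add: emeasure_ball ennreal_zero_less_mult_iff)
  also have "\<dots> = (\<integral>\<^sup>+ x. ennreal c * indicator (ball x\<^sub>0 r) x \<partial>lborel)"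
    by (simp add: nn_integral_cmult_indicator)
  also have "\<dots> \<le> (\<integral>\<^sup>+ x. f x \<partial>lborel)"
  proof (rule nn_integral_mono)
    fix x
    show "ennreal c * indicator (ball x\<^sub>0 r) x \<le> f x"
    proof (cases "x \<in> ball x\<^sub>0 r")
      case True
      then have "c \<le> \<phi> x" "x \<in> U" using r by auto
      then have "ennreal c \<le> f x" using assms(5) ennreal_leI order_trans by blast
      with True show ?thesis by simp
    qed simp
  qed
  finally show ?thesis .
qed

lemma scaleR_mem_open_cone:
  assumes "x \<in> open_cone A" "0 < c"
  shows "c *\<^sub>R x \<in> open_cone A"
proof -
  have "(c *\<^sub>R x) /\<^sub>R norm (c *\<^sub>R x) = x /\<^sub>R norm x"
    using assms(2) by simp
  moreover have "c *\<^sub>R x \<noteq> 0" using assms by (auto simp: open_cone_def)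
  ultimately show ?thesis using assms(1) unfolding open_cone_def mem_Collect_eq by metis
qed

lemma mem_open_cone_iff_unit: "norm \<xi> = 1 \<Longrightarrow> \<xi> \<in> open_cone A \<longleftrightarrow> \<xi> \<in> A"
  by (auto simp: open_cone_def)

lemma open_cone_Diff: "open_cone (A - B) = open_cone A - open_cone B"
  by (auto simp: open_cone_def)

lemma open_open_cone_sphere_Int:
  assumes "open S"
  shows "open (open_cone (sphere 0 1 \<inter> S))"
proof -
  have "open_cone (sphere 0 1 \<inter> S) = (- {0}) \<inter> (\<lambda>x. x /\<^sub>R norm x) -` S"
    by (auto simp: open_cone_def)
  moreover have "continuous_on (- {0}) (\<lambda>x::real^3. x /\<^sub>R norm x)"
    by (intro continuous_intros) auto
  ultimately show ?thesis
    using assms by (auto intro: continuous_open_preimage)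
qed

lemma open_cone_singleton_subset_span: "open_cone {a} \<subseteq> span {a}"
proof
  fix x assume "x \<in> open_cone {a}"
  then have "x = norm x *\<^sub>R a" by (auto simp: open_cone_def)
  then show "x \<in> span {a}" by (metis span_base span_scale singletonI)
qed

lemma AE_not_in_open_cone_singleton: "AE x in lborel. x \<notin> open_cone {a}"
proof -
  have "AE x in lborel. x \<notin> span {a}"
    using span_singleton_null_sets[of a] by (simp add: AE_not_in)
  then show ?thesis
    by eventually_elim (use open_cone_singleton_subset_span in auto)
qed

lemma negligible_open_cone_singleton: "negligible (open_cone {a})"
proof -
  have "span {a} \<in> null_sets lebesgue"
    using span_singleton_null_sets[of a] by (simp add: null_sets_completionI)
  then show ?thesis
    using open_cone_singleton_subset_span negligible_iff_null_sets negligible_subset by blast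
qed

lemma sphere_nn_integral_le:
  assumes "0 \<le> b" "\<And>\<xi>. \<xi> \<in> A \<Longrightarrow> \<xi> \<notin> N \<Longrightarrow> f \<xi> \<le> b"
    and "AE x in lborel. x \<notin> open_cone N"
  shows "sphere_nn_integral A f \<le> ennreal (3 * b * measure lborel (cball (0::real^3) 1))"
proof -
  have "(\<integral>\<^sup>+ x \<in> ball_sector A. ennreal (f (x /\<^sub>R norm x)) \<partial>lborel)
      \<le> (\<integral>\<^sup>+ x \<in> cball (0::real^3) 1. ennreal b \<partial>lborel)"
  proof (rule nn_integral_mono_AE)
    show "AE x in lborel. ennreal (f (x /\<^sub>R norm x)) * indicator (ball_sector A) x
        \<le> ennreal b * indicator (cball 0 1) x"
      using assms(3)
    proof eventually_elim
      case (elim x)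
      then show "ennreal (f (x /\<^sub>R norm x)) * indicator (ball_sector A) x
        \<le> ennreal b * indicator (cball 0 1) x"
        using assms(2) by (auto simp: ball_sector_def open_cone_def indicator_def intro: ennreal_leI)
    qed
  qed
  also have "\<dots> = ennreal (b * measure lborel (cball (0::real^3) 1))"
    using assms(1) emeasure_lborel_cball_finite[of "0::real^3" 1]
    by (simp add: nn_integral_cmult_indicator emeasure_eq_ennreal_measure ennreal_mult)
  finally show ?thesis
    unfolding sphere_nn_integral_def using assms(1)
    by (simp add: ennreal_mult mult.assoc mult_left_mono)
qed

lemma sphere_nn_integral_pos:
  assumes "B \<subseteq> A" "B \<subseteq> sphere 0 1" "\<xi>\<^sub>0 \<in> B" "open (open_cone B)" "continuous_on B \<phi>"
    and "\<And>\<xi>. \<xi> \<in> B \<Longrightarrow> 0 < \<phi> \<xi>" "\<And>\<xi>. \<xi> \<in> B \<Longrightarrow> \<phi> \<xi> \<le> f \<xi>"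
  shows "0 < sphere_nn_integral A f"
proof -
  let ?U = "open_cone B \<inter> ball 0 1"
  have "open ?U" using assms(4) by blast
  moreover have "(1/2) *\<^sub>R \<xi>\<^sub>0 \<in> ?U"
    using assms(2,3) mem_open_cone_iff_unit[of \<xi>\<^sub>0 B] scaleR_mem_open_cone[of \<xi>\<^sub>0 B "1/2"] by auto
  moreover have "continuous_on ?U (\<lambda>x. \<phi> (x /\<^sub>R norm x))"
    by (rule continuous_on_compose2[OF assms(5)]) (auto intro!: continuous_intros simp: open_cone_def)
  moreover have "0 < \<phi> (x /\<^sub>R norm x)" if "x \<in> ?U" for x
    using that assms(6) by (simp add: open_cone_def)
  moreover have "ennreal (\<phi> (x /\<^sub>R norm x)) \<le> ennreal (f (x /\<^sub>R norm x)) * indicator (ball_sector A) x"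
    if "x \<in> ?U" for x
  proof -
    have "x \<in> ball_sector A" using that assms(1) by (auto simp: open_cone_def ball_sector_def)
    then show ?thesis using that assms(7) by (simp add: open_cone_def ennreal_leI)
  qed
  ultimately have "0 < (\<integral>\<^sup>+ x. ennreal (f (x /\<^sub>R norm x)) * indicator (ball_sector A) x \<partial>lborel)"
    by (rule nn_integral_pos_if_continuous_minorant)
  then show ?thesis
    by (simp add: sphere_nn_integral_def ennreal_zero_less_mult_iff)
qed

lemma sgrad_norm_eq_norm_gradient:
  assumes "(hom0 u has_derivative (\<lambda>h. g \<bullet> h)) (at \<xi>)"
  shows "sgrad_norm u \<xi> = norm g"
  unfolding sgrad_norm_def frechet_derivative_at[OF assms, symmetric] by (rule onorm_inner_right_eq)

lemma has_derivative_inner_div_norm: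
  fixes a y :: "'a::real_inner"
  assumes "y \<noteq> 0"
  shows "((\<lambda>y. a \<bullet> y / norm y) has_derivative
           (\<lambda>h. (a /\<^sub>R norm y - (a \<bullet> y / norm y ^ 3) *\<^sub>R y) \<bullet> h)) (at y)"
  apply (rule has_derivative_eq_rhs)
   apply (rule derivative_eq_intros has_derivative_norm | use assms in simp)+
  apply (rule ext)
  apply (simp add: inner_diff_left sgn_div_norm)
  apply (simp add: field_simps power3_eq_cube inner_commute)
  done

lemma abs_north_inner_le_1: "norm \<xi> = 1 \<Longrightarrow> \<bar>north \<bullet> \<xi>\<bar> \<le> 1"
  using Cauchy_Schwarz_ineq2[of north \<xi>] by (simp add: north_def)

lemma north_mem_open_cap: "0 < R \<Longrightarrow> north \<in> open_cap R"
  by (simp add: open_cap_def sph_dist_def north_def)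

lemma open_cap_eq_sphere_Int:
  assumes "0 < R" "R < pi"
  shows "open_cap R = sphere 0 1 \<inter> {\<xi>. cos R < north \<bullet> \<xi>}"
  using assms arccos_less_iff_cos_less abs_north_inner_le_1
  by (auto simp: open_cap_def sph_dist_def)

lemma open_open_cone_open_cap_Diff:
  assumes "0 < R" "R < pi" "closed Z"
  shows "open (open_cone (open_cap R - Z))"
proof -
  have "open_cap R - Z = sphere 0 1 \<inter> ({\<xi>. cos R < north \<bullet> \<xi>} - Z)"
    using open_cap_eq_sphere_Int[OF assms(1,2)] by blast
  moreover have "open ({\<xi>. cos R < north \<bullet> \<xi>} - Z)"
    using assms(3) by (intro open_Diff open_Collect_less continuous_intros)
  ultimately show ?thesis by (simp add: open_open_cone_sphere_Int)
qed

lemma abs_north_inner_less_1: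
  assumes "R < pi" "\<xi> \<in> cap R" "\<xi> \<noteq> north"
  shows "\<bar>north \<bullet> \<xi>\<bar> < 1"
proof -
  have "norm \<xi> = 1" and dist: "arccos (north \<bullet> \<xi>) \<le> R"
    using assms(2) by (auto simp: cap_def sph_dist_def)
  moreover have "north \<bullet> \<xi> \<noteq> -1"
    using assms(1) dist by auto
  moreover have "north \<bullet> \<xi> \<noteq> 1"
    using unit_vectors_eq_if_inner_eq_1[of north \<xi>] \<open>norm \<xi> = 1\<close> assms(3) by (auto simp: north_def)
  ultimately show ?thesis
    using assms(1) abs_north_inner_le_1[of \<xi>] by (auto simp: abs_le_iff abs_less_iff)
qed

definition tent :: "real \<Rightarrow> real \<Rightarrow> real^3 \<Rightarrow> real" where
  "tent R c \<xi> = c * (R - sph_dist north \<xi>)"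

definition tent_grad :: "real \<Rightarrow> real^3 \<Rightarrow> real^3" where
  "tent_grad c y = (c / sqrt (1 - (north \<bullet> y / norm y)\<^sup>2)) *\<^sub>R
     (north /\<^sub>R norm y - (north \<bullet> y / norm y ^ 3) *\<^sub>R y)"

lemma hom0_tent: "hom0 (tent R c) = (\<lambda>y. c * (R - arccos (north \<bullet> y / norm y)))"
  by (simp add: fun_eq_iff hom0_def tent_def sph_dist_def divide_inverse_commute)

lemma hom0_tent_has_derivative:
  assumes "y \<noteq> 0" "\<bar>north \<bullet> y / norm y\<bar> < 1"
  shows "(hom0 (tent R c) has_derivative (\<lambda>h. tent_grad c y \<bullet> h)) (at y)"
proof -
  define g where "g = north /\<^sub>R norm y - (north \<bullet> y / norm y ^ 3) *\<^sub>R y"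
  define s where "s = sqrt (1 - (north \<bullet> y / norm y)\<^sup>2)"
  have grad: "tent_grad c y = (c / s) *\<^sub>R g"
    by (simp add: tent_grad_def g_def s_def)
  have "- 1 < north \<bullet> y / norm y" "north \<bullet> y / norm y < 1"
    using assms(2) by linarith+
  from has_derivative_arccos[OF this has_derivative_inner_div_norm[OF assms(1)]]
  have "((\<lambda>y. c * (R - arccos (north \<bullet> y / norm y))) has_derivative
      (\<lambda>h. c * (0 - g \<bullet> h * inverse (- s)))) (at y)"
    unfolding g_def s_def by (intro has_derivative_mult_right has_derivative_diff has_derivative_const)
  then show ?thesis
    unfolding hom0_tent by (rule has_derivative_eq_rhs) (simp add: fun_eq_iff divide_inverse grad)
qed

lemma norm_tent_grad:
  assumes "norm \<xi> = 1" "\<bar>north \<bullet> \<xi>\<bar> < 1" "0 \<le> c"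
  shows "norm (tent_grad c \<xi>) = c"
proof -
  define t where "t = north \<bullet> \<xi>"
  have "\<xi> \<bullet> \<xi> = 1" "north \<bullet> north = 1"
    using assms(1) by (simp_all add: north_def flip: norm_eq_1)
  then have "(north - t *\<^sub>R \<xi>) \<bullet> (north - t *\<^sub>R \<xi>) = 1 - t\<^sup>2"
    by (simp add: inner_diff_left inner_diff_right inner_commute t_def power2_eq_square)
  then have "norm (north - t *\<^sub>R \<xi>) = sqrt (1 - t\<^sup>2)"
    by (simp add: norm_eq_sqrt_inner)
  moreover have "0 < sqrt (1 - t\<^sup>2)"
    using assms(2) by (simp add: t_def abs_square_less_1)
  ultimately show ?thesis
    using assms by (simp add: tent_grad_def t_def)
qed

lemma sgrad_norm_tent:
  assumes "norm \<xi> = 1" "\<bar>north \<bullet> \<xi>\<bar> < 1" "0 \<le> c"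
  shows "sgrad_norm (tent R c) \<xi> = c"
proof -
  have "\<xi> \<noteq> 0" "\<bar>north \<bullet> \<xi> / norm \<xi>\<bar> < 1" using assms(1,2) by auto
  from sgrad_norm_eq_norm_gradient[OF hom0_tent_has_derivative[OF this]]
  show ?thesis using norm_tent_grad[OF assms] by simp
qed

lemma abs_north_inner_div_norm_less_1:
  assumes "R < pi" "x \<in> open_cone (open_cap R - {north})"
  shows "\<bar>north \<bullet> x / norm x\<bar> < 1"
proof -
  have "x /\<^sub>R norm x \<in> cap R" "x /\<^sub>R norm x \<noteq> north"
    using assms(2) by (auto simp: open_cone_def open_cap_def cap_def)
  from abs_north_inner_less_1[OF assms(1) this] show ?thesis
    by (simp only: inner_scaleR_right divide_inverse_commute)
qed

lemma tent_admissible: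
  assumes "0 < R" "R < pi" "0 \<le> c"
  shows "tent R c \<in> admissible R"
proof -
  let ?W = "open_cone (open_cap R - {north})"
  have "continuous_on (cap R) (tent R c)"
    unfolding tent_def sph_dist_def using abs_north_inner_le_1
    by (intro continuous_intros) (auto simp: cap_def abs_le_iff)
  moreover have "\<forall>x \<in> ?W. (hom0 (tent R c) has_derivative (\<lambda>h. tent_grad c x \<bullet> h)) (at x)"
    using hom0_tent_has_derivative abs_north_inner_div_norm_less_1[OF assms(2)]
    by (auto simp: open_cone_def)
  moreover have "continuous_on ?W (tent_grad c)"
  proof -
    have "norm x \<noteq> 0 \<and> sqrt (1 - (north \<bullet> x / norm x)\<^sup>2) \<noteq> 0" if "x \<in> ?W" for x
    proof -
      have "(north \<bullet> x / norm x)\<^sup>2 < 1"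
        using abs_north_inner_div_norm_less_1[OF assms(2) that] abs_square_less_1 by blast
      then show ?thesis using that by (simp add: open_cone_def)
    qed
    then show ?thesis
      unfolding tent_grad_def by (intro continuous_intros) auto
  qed
  ultimately have "piecewise_C1_cap R (tent R c)"
    unfolding piecewise_C1_cap_def using negligible_open_cone_singleton
    by (intro conjI exI[of _ "{north}"]) (auto simp: north_def)
  then show ?thesis
    using assms(3) by (auto simp: admissible_def tent_def cap_def cap_boundary_def)
qed

lemma R2_tent_le:
  assumes "0 < R" "R < pi" "0 \<le> c"
  shows "R2 R (tent R c) \<le> ennreal (3 * measure lborel (cball (0::real^3) 1) / (1 + c\<^sup>2))"
proof -
  have "exp (- 2 * tent R c \<xi>) / (1 + (sgrad_norm (tent R c) \<xi>)\<^sup>2) \<le> 1 / (1 + c\<^sup>2)"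
    if "\<xi> \<in> cap R" "\<xi> \<notin> {north}" for \<xi>
  proof -
    have "norm \<xi> = 1" using that(1) by (simp add: cap_def)
    with abs_north_inner_less_1[OF assms(2)] that
    have "sgrad_norm (tent R c) \<xi> = c" by (simp add: sgrad_norm_tent assms(3))
    moreover have "0 \<le> tent R c \<xi>" using that(1) assms(3) by (simp add: cap_def tent_def)
    ultimately show ?thesis by (simp add: frac_le add_pos_nonneg)
  qed
  \<comment> \<open>At the north pole \<open>hom0 (tent R c)\<close> is not differentiable and \<open>sgrad_norm\<close> is a junk
      value; the ray over it is a null set.\<close>
  from sphere_nn_integral_le[OF _ this AE_not_in_open_cone_singleton]
  show ?thesis by (simp add: R2_def add_pos_nonneg)
qed

lemma INF_R2_eq_0:
  assumes "0 < R" "R < pi"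
  shows "(INF u \<in> admissible R. R2 R u) = 0"
proof (rule antisym[OF ennreal_le_epsilon zero_le])
  fix e :: real assume "0 < e"
  define C where "C = 3 * measure lborel (cball (0::real^3) 1)"
  define c where "c = sqrt (C / e)"
  have "0 \<le> C" by (simp add: C_def)
  then have "0 \<le> c" "c\<^sup>2 = C / e" using \<open>0 < e\<close> by (simp_all add: c_def)
  have "(INF u \<in> admissible R. R2 R u) \<le> R2 R (tent R c)"
    using tent_admissible[OF assms \<open>0 \<le> c\<close>] by (rule INF_lower)
  also have "\<dots> \<le> ennreal (C / (1 + c\<^sup>2))"
    using R2_tent_le[OF assms \<open>0 \<le> c\<close>] by (simp add: C_def)
  also have "C / (1 + c\<^sup>2) \<le> e"
  proof -
    have "C \<le> e * (1 + c\<^sup>2)"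
      using \<open>c\<^sup>2 = C / e\<close> \<open>0 < e\<close> \<open>0 \<le> C\<close> by (simp add: algebra_simps)
    then show ?thesis by (simp add: pos_divide_le_eq add_pos_nonneg)
  qed
  finally show "(INF u \<in> admissible R. R2 R u) \<le> 0 + ennreal e"
    by (simp add: ennreal_leI)
qed

lemma R2_pos:
  assumes "0 < R" "R < pi" "u \<in> admissible R"
  shows "0 < R2 R u"
proof -
  obtain Z g where "continuous_on (cap R) u" "closed Z" "negligible (open_cone Z)"
    and der: "\<forall>x \<in> open_cone (open_cap R - Z). (hom0 u has_derivative (\<lambda>h. g x \<bullet> h)) (at x)"
    and "continuous_on (open_cone (open_cap R - Z)) g"
    using assms(3) unfolding admissible_def piecewise_C1_cap_def by blast
  define B where "B = open_cap R - Z"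
  have "B \<subseteq> cap R" "B \<subseteq> sphere 0 1"
    by (auto simp: B_def open_cap_def cap_def)
  have "open (open_cone B)"
    unfolding B_def using assms(1,2) \<open>closed Z\<close> by (rule open_open_cone_open_cap_Diff)
  have "\<not> negligible (open_cone (open_cap R))"
    using open_open_cone_open_cap_Diff[OF assms(1,2) closed_empty] north_mem_open_cap[OF assms(1)]
      mem_open_cone_iff_unit[of north] open_not_negligible
    by (auto simp: north_def)
  then obtain x where "x \<in> open_cone B"
    using \<open>negligible (open_cone Z)\<close> negligible_subset unfolding B_def open_cone_Diff by blast
  then have "x /\<^sub>R norm x \<in> B" by (simp add: open_cone_def)
  have "B \<subseteq> open_cone B"
    using \<open>B \<subseteq> sphere 0 1\<close> mem_open_cone_iff_unit by auto
  have "continuous_on B (\<lambda>\<xi>. exp (- 2 * u \<xi>) / (1 + (norm (g \<xi>))\<^sup>2))"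
    using \<open>B \<subseteq> cap R\<close> \<open>B \<subseteq> open_cone B\<close>
      \<open>continuous_on (cap R) u\<close> \<open>continuous_on (open_cone (open_cap R - Z)) g\<close>
    unfolding B_def
    by (intro continuous_intros) (auto intro: continuous_on_subset simp: add_nonneg_eq_0_iff)
  moreover have "sgrad_norm u \<xi> = norm (g \<xi>)" if "\<xi> \<in> B" for \<xi>
    using der \<open>B \<subseteq> open_cone B\<close> that by (auto simp: B_def intro: sgrad_norm_eq_norm_gradient)
  ultimately show ?thesis
    unfolding R2_def
    using \<open>B \<subseteq> cap R\<close> \<open>B \<subseteq> sphere 0 1\<close> \<open>x /\<^sub>R norm x \<in> B\<close> \<open>open (open_cone B)\<close>
    by (intro sphere_nn_integral_pos[where B = B]) (auto simp: add_pos_nonneg)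
qed

theorem proposition3p5:
  fixes R :: real
  assumes "0 < R" and "R < pi"
  shows "(INF u \<in> admissible R. R2 R u) = 0 \<and>
         \<not> (\<exists>u \<in> admissible R. \<forall>v \<in> admissible R. R2 R u \<le> R2 R v)"
proof
  show inf: "(INF u \<in> admissible R. R2 R u) = 0"
    using assms by (rule INF_R2_eq_0)
  show "\<not> (\<exists>u \<in> admissible R. \<forall>v \<in> admissible R. R2 R u \<le> R2 R v)"
  proof
    assume "\<exists>u \<in> admissible R. \<forall>v \<in> admissible R. R2 R u \<le> R2 R v"
    then obtain u where "u \<in> admissible R" "R2 R u \<le> (INF v \<in> admissible R. R2 R v)"
      by (auto intro: INF_greatest)
    with R2_pos[OF assms] show False
      unfolding inf by (simp add: not_le[symmetric])
  qed
qed

end
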